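(* Let $p(y),q(y)\in\mathbb{C}[y]$ be coprime polynomials such that $p/q$ is nonconstant and $\deg q\le\deg p$. Let $x_1,\dots,x_n$ be distinct points of the Riemann sphere with homogeneous coordinates $[\alpha_i:\beta_i]$ ($x_i=\alpha_i/\beta_i$), and suppose that for each $i$ there is a polynomial $\tilde p_i(y)$ with $$\beta_i\,p(y)-\alpha_i\,q(y)=\tilde p_i(y)^2.$$ Then: (1) if $n=1$ and $x_1=0$, then $x=p/q=P^2/q$ for some polynomial $P$; (2) if $n=2$ and $\{x_1,x_2\}=\{0,\infty\}$, then $x=p/q=P^2/Q^2$ for some polynomials $P,Q$; (3) if $n=3$ and $\{x_1,x_2,x_3\}=\{0,\infty,1\}$, then $x=p/q=\left(\frac{P^2+Q^2}{2PQ}\right)^2$ for some polynomials $P,Q$; (4) if $n\ge 4$, no such $p,q$ exist.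
   Context: The condition expresses that the change of variable $x=p(y)/q(y)$ has every preimage of each point $x_i$ of even multiplicity (used to make half-integer eigenvalues of matrix residues at the points $x_i$ integer after the change of variable). *)

theory Defs
  imports "HOL-Computational_Algebra.Polynomial_Factorial"
begin

text \<open>Points of the Riemann sphere are given by homogeneous coordinates
  [a : b] with (a,b) \<noteq> (0,0); the point is a/b (infinity when b = 0).\<close>

definition hom_point :: "complex \<Rightarrow> complex \<Rightarrow> bool" where
  "hom_point a b \<longleftrightarrow> (a, b) \<noteq> (0, 0)"

definition proj_eq :: "complex \<times> complex \<Rightarrow> complex \<times> complex \<Rightarrow> bool" where
  "proj_eq u v \<longleftrightarrow> fst u * snd v = snd u * fst v"

definition pt_zero :: "complex \<times> complex" where "pt_zero = (0, 1)"
definition pt_infty :: "complex \<times> complex" where "pt_infty = (1, 0)"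
definition pt_one :: "complex \<times> complex" where "pt_one = (1, 1)"

definition pts_set_eq :: "nat \<Rightarrow> (nat \<Rightarrow> complex) \<Rightarrow> (nat \<Rightarrow> complex) \<Rightarrow> (complex \<times> complex) set \<Rightarrow> bool" where
  "pts_set_eq n \<alpha> \<beta> S \<longleftrightarrow>
     (\<forall>i<n. \<exists>s\<in>S. proj_eq (\<alpha> i, \<beta> i) s) \<and> (\<forall>s\<in>S. \<exists>i<n. proj_eq (\<alpha> i, \<beta> i) s)"

end

theory Submission
  imports Defs "HOL-Computational_Algebra.Nth_Powers" "HOL-Computational_Algebra.Field_as_Ring"
begin

text \<open>For x = p/q the points x_i correspond to the members f = \<beta> p - \<alpha> q of the pencil
  spanned by p and q. Any two members have, up to a nonzero constant, the same Wronskian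
  W = p' q - p q', which is nonzero because p/q is not constant. If f = g^2 then g divides the
  Wronskian of f with any other member, hence g divides W. Square roots of members at distinct
  points are pairwise coprime, so with four points g_1 g_2 g_3 g_4 divides W, while
  deg W < deg f_i + deg f_j = 2 (deg g_i + deg g_j) for i \<noteq> j; adding this bound for the pairs
  {1, 2} and {3, 4} gives a contradiction.

  At 0, \<infinity> and 1 the members are p = u^2, q = v^2 (up to sign) and p - q = w^2, so
  q = (u + w) (u - w) with coprime factors. Both factors are then squares P^2 and Q^2, whence
  2 u = P^2 + Q^2 and q = P^2 Q^2.\<close>

lemma is_nth_power_normalize_mult_coprimeD:
  fixes a b :: "'a :: {factorial_semiring, normalization_semidom_multiplicative}"
  assumes "coprime a b" "is_nth_power n (a * b)" "a \<noteq> 0" "b \<noteq> 0" "n > 0"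
  shows "is_nth_power n (normalize a)"
  unfolding is_nth_power_conv_multiplicity[OF \<open>n > 0\<close>]
proof safe
  fix r :: 'a assume r: "prime r"
  from assms(2) obtain y where "a * b = y ^ n" by (auto elim: is_nth_powerE)
  then have "is_nth_power n (normalize (a * b))"
    by (simp add: normalize_power is_nth_powerI)
  with r assms(3,4,5) have "n dvd multiplicity r a + multiplicity r b"
    by (simp add: is_nth_power_conv_multiplicity prime_elem_multiplicity_mult_distrib)
  moreover have "\<not> (r dvd a \<and> r dvd b)"
    using assms(1) r by (meson coprime_common_divisor not_prime_unit)
  ultimately show "n dvd multiplicity r a"
    by (auto simp: not_dvd_imp_multiplicity_0)
qed

lemma is_square_smult:
  fixes X :: "complex poly"
  assumes "is_square X"
  shows "is_square (smult c X)"
proof -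
  from assms obtain y where "X = y ^ 2" by (auto elim: is_nth_powerE)
  then have "smult c X = (smult (csqrt c) y) ^ 2"
    by (simp add: smult_power)
  then show ?thesis by (rule is_nth_powerI)
qed

lemma is_square_smult_iff:
  fixes X :: "complex poly"
  assumes "c \<noteq> 0"
  shows "is_square (smult c X) \<longleftrightarrow> is_square X"
  using is_square_smult[of X c] is_square_smult[of "smult c X" "1 / c"] assms by auto

lemma is_square_uminus_iff:
  fixes X :: "complex poly"
  shows "is_square (- X) \<longleftrightarrow> is_square X"
  using is_square_smult_iff[of "-1" X] by simp

lemma is_square_normalize_iff:
  fixes a :: "complex poly"
  shows "is_square (normalize a) \<longleftrightarrow> is_square a"
proof (cases "a = 0")
  case False
  have "a = unit_factor a * normalize a" by simp
  also have "unit_factor a = [:lead_coeff a:]" by (simp add: unit_factor_poly_def)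
  finally have "a = smult (lead_coeff a) (normalize a)" by simp
  then show ?thesis using False by (metis is_square_smult_iff leading_coeff_0_iff)
qed simp

lemma is_square_mult_coprimeD:
  fixes a b :: "complex poly"
  assumes "coprime a b" "is_square (a * b)"
  shows "is_square a"
proof (cases "a = 0 \<or> b = 0")
  case True
  then show ?thesis
  proof
    assume "b = 0"
    with assms(1) have "is_unit a" by simp
    then have "normalize a = 1" by (simp add: is_unit_normalize)
    then show ?thesis by (metis is_square_normalize_iff is_nth_power_1)
  qed simp
next
  case False
  then show ?thesis using is_nth_power_normalize_mult_coprimeD[OF assms] is_square_normalize_iff
    by auto
qed

definition wronskian :: "'a::idom poly \<Rightarrow> 'a poly \<Rightarrow> 'a poly" where
  "wronskian a b = pderiv a * b - a * pderiv b"

text \<open>For coprime p and q, pencil p q (a, b) = b p - a q vanishes exactly at the preimages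
  of the point [a : b] under x = p/q.\<close>

definition pencil :: "'a::comm_ring_1 poly \<Rightarrow> 'a poly \<Rightarrow> 'a \<times> 'a \<Rightarrow> 'a poly" where
  "pencil p q x = smult (snd x) p - smult (fst x) q"

lemma wronskian_pencil:
  "wronskian (pencil p q x) (pencil p q y) = smult (fst x * snd y - snd x * fst y) (wronskian p q)"
  by (simp add: wronskian_def pencil_def pderiv_diff pderiv_smult algebra_simps
      smult_diff_left smult_diff_right)

lemma dvd_wronskian_square: "g dvd wronskian (g ^ 2) h"
  by (simp add: wronskian_def power2_eq_square pderiv_mult)

lemma degree_pderiv_mult_le:
  fixes a b :: "'a::{idom, ring_char_0} poly"
  shows "degree (pderiv a * b) \<le> degree a + degree b - 1"
proof (cases "degree a = 0")
  case True
  then have "pderiv a = 0" by (simp add: pderiv_eq_0_iff)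
  then show ?thesis by simp
next
  case False
  have "degree (pderiv a * b) \<le> degree (pderiv a) + degree b" by (rule degree_mult_le)
  with False show ?thesis by (simp add: degree_pderiv)
qed

lemma degree_wronskian_less:
  fixes a b :: "'a::{idom, ring_char_0} poly"
  assumes "wronskian a b \<noteq> 0"
  shows "degree (wronskian a b) < degree a + degree b"
proof -
  have "degree a + degree b \<noteq> 0"
    using assms by (auto simp: wronskian_def simp flip: pderiv_eq_0_iff)
  moreover have "degree (wronskian a b) \<le> degree a + degree b - 1"
    unfolding wronskian_def
    using degree_pderiv_mult_le[of a b] degree_pderiv_mult_le[of b a]
    by (intro degree_diff_le) (simp_all add: mult.commute add.commute)
  ultimately show ?thesis by linarith
qed

lemma wronskian_nonzero:
  fixes p q :: "'a::{field_char_0, field_gcd} poly"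
  assumes "coprime p q" "q \<noteq> 0" "\<forall>c. p \<noteq> smult c q"
  shows "wronskian p q \<noteq> 0"
proof
  assume "wronskian p q = 0"
  then have E: "pderiv p * q = p * pderiv q" by (simp add: wronskian_def)
  then have "q dvd p * pderiv q" by (metis dvd_triv_right)
  moreover have "coprime q p" using assms(1) by (simp add: coprime_commute)
  ultimately have "q dvd pderiv q" using coprime_dvd_mult_right_iff[of q p "pderiv q"] by simp
  then have "pderiv q = 0" by (simp add: pderiv_eq_0_iff)
  with E assms(2) have "pderiv p = 0" by simp
  with \<open>pderiv q = 0\<close> obtain c d where "p = [:d:]" "q = [:c:]"
    by (metis degree_eq_zeroE pderiv_eq_0_iff)
  with assms(2) have "p = smult (d / c) q" by simp
  with assms(3) show False by blast
qed

lemma coprime_pencil: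
  fixes p q :: "'a::field poly"
  assumes "coprime p q" "fst x * snd y \<noteq> snd x * fst y"
  shows "coprime (pencil p q x) (pencil p q y)"
proof (rule coprimeI)
  fix r assume r: "r dvd pencil p q x" "r dvd pencil p q y"
  define d where "d = fst y * snd x - fst x * snd y"
  have "smult (fst y) (pencil p q x) - smult (fst x) (pencil p q y) = smult d p"
    "smult (snd y) (pencil p q x) - smult (snd x) (pencil p q y) = smult d q"
    by (simp_all add: pencil_def d_def algebra_simps smult_diff_left smult_diff_right)
  then have "r dvd smult d p" "r dvd smult d q"
    using r by (metis dvd_diff dvd_smult)+
  moreover have "d \<noteq> 0" using assms(2) by (simp add: d_def algebra_simps)
  ultimately show "is_unit r"
    by (meson assms(1) coprime_common_divisor dvd_smult_cancel)
qed

lemma square_root_dvd_wronskian_pencil: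
  fixes p q :: "'a::field poly"
  assumes "fst x * snd y \<noteq> snd x * fst y" "pencil p q x = g ^ 2"
  shows "g dvd wronskian p q"
proof -
  have "g dvd wronskian (pencil p q x) (pencil p q y)"
    unfolding assms(2) by (rule dvd_wronskian_square)
  then show ?thesis
    using assms(1) by (simp add: wronskian_pencil dvd_smult_cancel)
qed

lemma degree_wronskian_less_pencil:
  fixes p q :: "'a::field_char_0 poly"
  assumes "fst x * snd y \<noteq> snd x * fst y" "wronskian p q \<noteq> 0"
  shows "degree (wronskian p q) < degree (pencil p q x) + degree (pencil p q y)"
proof -
  have "wronskian (pencil p q x) (pencil p q y) \<noteq> 0"
    using assms by (simp add: wronskian_pencil)
  then show ?thesis
    using degree_wronskian_less[of "pencil p q x" "pencil p q y"] assms(1)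
    by (simp add: wronskian_pencil)
qed

lemma no_four_squares_in_pencil:
  fixes p q :: "'a::{field_char_0, field_gcd} poly" and x :: "nat \<Rightarrow> 'a \<times> 'a" and g :: "nat \<Rightarrow> 'a poly"
  assumes cop: "coprime p q" and W: "wronskian p q \<noteq> 0"
    and dist: "\<And>i j. i < 4 \<Longrightarrow> j < 4 \<Longrightarrow> i \<noteq> j \<Longrightarrow> fst (x i) * snd (x j) \<noteq> snd (x i) * fst (x j)"
    and sq: "\<And>i. i < 4 \<Longrightarrow> pencil p q (x i) = g i ^ 2"
  shows False
proof -
  have dvd: "g i dvd wronskian p q" if "i < 4" for i
    using square_root_dvd_wronskian_pencil[OF dist sq[OF that], of "if i = 0 then 1 else 0"] that
    by auto
  have coprime: "coprime (g i) (g j)" if "i < 4" "j < 4" "i \<noteq> j" for i j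
    using coprime_pencil[OF cop dist[OF that]] sq that by simp
  have deg: "degree (wronskian p q) < 2 * degree (g i) + 2 * degree (g j)"
    if "i < 4" "j < 4" "i \<noteq> j" for i j
    using degree_wronskian_less_pencil[OF dist[OF that] W] sq that
      degree_power_le[of "g i" 2] degree_power_le[of "g j" 2] by simp
  have "(g 0 * g 1) * (g 2 * g 3) dvd wronskian p q"
    using dvd coprime by (simp add: divides_mult)
  then have "(g 0 * g 1) * (g 2 * g 3) \<noteq> 0" and
    "degree ((g 0 * g 1) * (g 2 * g 3)) \<le> degree (wronskian p q)"
    using W by (auto intro: dvd_imp_degree_le)
  then have "degree (g 0) + degree (g 1) + degree (g 2) + degree (g 3) \<le> degree (wronskian p q)"
    by (simp add: degree_mult_eq)
  with deg[of 0 1] deg[of 2 3] show False by simp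
qed

lemma pencil_proj_eq:
  assumes "hom_point (fst x) (snd x)" "hom_point (fst y) (snd y)" "proj_eq x y"
  shows "\<exists>c. c \<noteq> 0 \<and> pencil p q x = smult c (pencil p q y)"
proof (cases "snd y = 0")
  case True
  with assms have "fst y \<noteq> 0" "snd x = 0" "fst x \<noteq> 0"
    by (auto simp: hom_point_def proj_eq_def prod_eq_iff)
  then have "pencil p q x = smult (fst x / fst y) (pencil p q y)"
    using True by (simp add: pencil_def)
  moreover have "fst x / fst y \<noteq> 0" using \<open>fst x \<noteq> 0\<close> \<open>fst y \<noteq> 0\<close> by simp
  ultimately show ?thesis by blast
next
  case False
  with assms have "snd x \<noteq> 0" "fst x = snd x * fst y / snd y"
    by (auto simp: hom_point_def proj_eq_def prod_eq_iff field_simps)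
  then have "pencil p q x = smult (snd x / snd y) (pencil p q y)"
    using False by (simp add: pencil_def smult_diff_right)
  moreover have "snd x / snd y \<noteq> 0" using \<open>snd x \<noteq> 0\<close> False by simp
  ultimately show ?thesis by blast
qed

lemma is_square_pencil_proj_eq:
  fixes p q :: "complex poly"
  assumes "hom_point (fst x) (snd x)" "hom_point (fst y) (snd y)" "proj_eq x y"
    and "is_square (pencil p q x)"
  shows "is_square (pencil p q y)"
  using pencil_proj_eq[OF assms(1-3)] assms(4) is_square_smult_iff by metis

lemma coprime_add_diff:
  fixes u w :: "'a::field_char_0 poly"
  assumes "coprime u w"
  shows "coprime (u + w) (u - w)"
proof (rule coprimeI)
  fix r assume "r dvd u + w" "r dvd u - w"
  then have "r dvd smult (1 / 2) ((u + w) + (u - w))" "r dvd smult (1 / 2) ((u + w) - (u - w))"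
    by (blast intro: dvd_smult dvd_add dvd_diff)+
  moreover have "smult (1 / 2) ((u + w) + (u - w)) = u" "smult (1 / 2) ((u + w) - (u - w)) = w"
    by (simp_all add: numeral_poly)
  ultimately have "r dvd u" "r dvd w" by simp_all
  then show "is_unit r" by (rule coprime_common_divisor[OF assms])
qed

lemma parametrization_of_squares_at_0_infty_1:
  fixes p q u v w :: "complex poly"
  assumes cop: "coprime p q" and "q \<noteq> 0"
    and p: "p = u ^ 2" and q: "q = v ^ 2" and pq: "p - q = w ^ 2"
  shows "\<exists>P Q. P \<noteq> 0 \<and> Q \<noteq> 0 \<and> p * (smult 2 (P * Q)) ^ 2 = (P ^ 2 + Q ^ 2) ^ 2 * q"
proof -
  have factor: "q = (u + w) * (u - w)"
    using p pq by (simp add: algebra_simps power2_eq_square)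
  have "coprime u w"
  proof (rule coprimeI)
    fix r assume "r dvd u" "r dvd w"
    then have "r dvd p" "r dvd p - q"
      using p pq by (simp_all add: power2_eq_square)
    then have "r dvd p - (p - q)" by (rule dvd_diff)
    with \<open>r dvd p\<close> show "is_unit r" using coprime_common_divisor[OF cop] by simp
  qed
  then have "coprime (u + w) (u - w)" by (rule coprime_add_diff)
  then have "coprime (u + w) (u - w)" "coprime (u - w) (u + w)"
    by (simp_all add: coprime_commute)
  moreover have "is_square ((u + w) * (u - w))"
    using factor q by (metis is_nth_powerI)
  then have "is_square ((u + w) * (u - w))" "is_square ((u - w) * (u + w))"
    by (simp_all add: mult.commute)
  ultimately have "is_square (u + w)" "is_square (u - w)"
    by (simp_all add: is_square_mult_coprimeD)
  then obtain P Q where P: "u + w = P ^ 2" and Q: "u - w = Q ^ 2"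
    by (auto elim!: is_nth_powerE)
  have "P \<noteq> 0" "Q \<noteq> 0" using P Q factor \<open>q \<noteq> 0\<close> by auto
  moreover have "P ^ 2 + Q ^ 2 = smult 2 u"
    unfolding P [symmetric] Q [symmetric] by (simp add: numeral_poly)
  then have "p * (smult 2 (P * Q)) ^ 2 = (P ^ 2 + Q ^ 2) ^ 2 * q"
    unfolding factor p P Q by (simp add: smult_power power_mult_distrib algebra_simps)
  ultimately show ?thesis by blast
qed

lemma pts_set_eq_covers:
  assumes "pts_set_eq n \<alpha> \<beta> S" "s \<in> S"
  shows "\<exists>i<n. proj_eq (\<alpha> i, \<beta> i) s"
  using assms unfolding pts_set_eq_def by blast

lemma hom_point_special_points:
  "hom_point (fst pt_zero) (snd pt_zero)" "hom_point (fst pt_infty) (snd pt_infty)"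
  "hom_point (fst pt_one) (snd pt_one)"
  by (simp_all add: hom_point_def pt_zero_def pt_infty_def pt_one_def)

lemma pencil_special_points:
  "pencil p q pt_zero = p" "pencil p q pt_infty = - q" "pencil p q pt_one = p - q"
  by (simp_all add: pencil_def pt_zero_def pt_infty_def pt_one_def)

lemma is_square_pencil_if_covered:
  fixes p q :: "complex poly" and n :: nat and \<alpha> \<beta> :: "nat \<Rightarrow> complex"
  assumes pts: "\<forall>i<n. hom_point (\<alpha> i) (\<beta> i)"
    and sq: "\<forall>i<n. \<exists>g. smult (\<beta> i) p - smult (\<alpha> i) q = g ^ 2"
    and "hom_point (fst s) (snd s)" "\<exists>i<n. proj_eq (\<alpha> i, \<beta> i) s"
  shows "is_square (pencil p q s)"
proof -
  from assms(4) obtain i where i: "i < n" "proj_eq (\<alpha> i, \<beta> i) s" by blast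
  with sq obtain g where "pencil p q (\<alpha> i, \<beta> i) = g ^ 2"
    by (auto simp: pencil_def)
  then have "is_square (pencil p q (\<alpha> i, \<beta> i))" by (rule is_nth_powerI)
  with i pts assms(3) show ?thesis
    using is_square_pencil_proj_eq[of "(\<alpha> i, \<beta> i)" s] by auto
qed

lemma less_four_square_points:
  fixes p q :: "complex poly" and n :: nat and \<alpha> \<beta> :: "nat \<Rightarrow> complex"
  assumes cop: "coprime p q" and "q \<noteq> 0" "\<forall>c. p \<noteq> smult c q"
    and dist: "\<forall>i<n. \<forall>j<n. i \<noteq> j \<longrightarrow> \<not> proj_eq (\<alpha> i, \<beta> i) (\<alpha> j, \<beta> j)"
    and sq: "\<forall>i<n. \<exists>g. smult (\<beta> i) p - smult (\<alpha> i) q = g ^ 2"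
  shows "n < 4"
proof (rule ccontr)
  assume "\<not> n < 4"
  from sq obtain g where g: "\<And>i. i < n \<Longrightarrow> pencil p q (\<alpha> i, \<beta> i) = g i ^ 2"
    unfolding pencil_def by (metis fst_conv snd_conv)
  have "\<And>i j. i < 4 \<Longrightarrow> j < 4 \<Longrightarrow> i \<noteq> j \<Longrightarrow> \<alpha> i * \<beta> j \<noteq> \<beta> i * \<alpha> j"
    using dist \<open>\<not> n < 4\<close> by (simp add: proj_eq_def)
  with g \<open>\<not> n < 4\<close> show False
    using no_four_squares_in_pencil[OF cop wronskian_nonzero[OF assms(1-3)],
        of "\<lambda>i. (\<alpha> i, \<beta> i)" g] by simp
qed

theorem mainTheorem5:
  fixes p q :: "complex poly" and n :: nat and \<alpha> \<beta> :: "nat \<Rightarrow> complex"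
  assumes cop: "coprime p q"
    and qnz: "q \<noteq> 0"
    and nonconst: "\<forall>c. p \<noteq> smult c q"
    and deg: "degree q \<le> degree p"
    and pts: "\<forall>i<n. hom_point (\<alpha> i) (\<beta> i)"
    and dist: "\<forall>i<n. \<forall>j<n. i \<noteq> j \<longrightarrow> \<not> proj_eq (\<alpha> i, \<beta> i) (\<alpha> j, \<beta> j)"
    and sq: "\<forall>i<n. \<exists>pt :: complex poly. smult (\<beta> i) p - smult (\<alpha> i) q = pt ^ 2"
  shows "(n = 1 \<and> proj_eq (\<alpha> 0, \<beta> 0) pt_zero \<longrightarrow> (\<exists>P :: complex poly. p = P ^ 2))
       \<and> (n = 2 \<and> pts_set_eq n \<alpha> \<beta> {pt_zero, pt_infty} \<longrightarrow>
            (\<exists>P Q :: complex poly. Q \<noteq> 0 \<and> p * Q ^ 2 = P ^ 2 * q))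
       \<and> (n = 3 \<and> pts_set_eq n \<alpha> \<beta> {pt_zero, pt_infty, pt_one} \<longrightarrow>
            (\<exists>P Q :: complex poly. P \<noteq> 0 \<and> Q \<noteq> 0 \<and>
                 p * (smult 2 (P * Q)) ^ 2 = (P ^ 2 + Q ^ 2) ^ 2 * q))
       \<and> \<not> (n \<ge> 4)"
proof -
  note square_at = hom_point_special_points[THEN is_square_pencil_if_covered[OF pts sq],
      unfolded pencil_special_points]
  show ?thesis
  proof (intro conjI impI)
    assume "n = 1 \<and> proj_eq (\<alpha> 0, \<beta> 0) pt_zero"
    then have "is_square p" using square_at by auto
    then show "\<exists>P. p = P ^ 2" by (auto elim: is_nth_powerE)
  next
    assume "n = 2 \<and> pts_set_eq n \<alpha> \<beta> {pt_zero, pt_infty}"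
    then have S: "pts_set_eq n \<alpha> \<beta> {pt_zero, pt_infty}" ..
    have "is_square p" "is_square (- q)"
      using square_at pts_set_eq_covers[OF S] by simp_all
    then obtain P Q where "p = P ^ 2" "q = Q ^ 2"
      by (auto simp: is_square_uminus_iff elim!: is_nth_powerE)
    with qnz have "Q \<noteq> 0" "p * Q ^ 2 = P ^ 2 * q" by (simp_all add: mult.commute)
    then show "\<exists>P Q. Q \<noteq> 0 \<and> p * Q ^ 2 = P ^ 2 * q" by blast
  next
    assume "n = 3 \<and> pts_set_eq n \<alpha> \<beta> {pt_zero, pt_infty, pt_one}"
    then have S: "pts_set_eq n \<alpha> \<beta> {pt_zero, pt_infty, pt_one}" ..
    have "is_square p" "is_square (- q)" "is_square (p - q)"
      using square_at pts_set_eq_covers[OF S] by simp_all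
    then obtain u v w where "p = u ^ 2" "q = v ^ 2" "p - q = w ^ 2"
      by (auto simp: is_square_uminus_iff elim!: is_nth_powerE)
    then show "\<exists>P Q. P \<noteq> 0 \<and> Q \<noteq> 0 \<and> p * (smult 2 (P * Q)) ^ 2 = (P ^ 2 + Q ^ 2) ^ 2 * q"
      by (rule parametrization_of_squares_at_0_infty_1[OF cop qnz])
  next
    show "\<not> n \<ge> 4"
      using less_four_square_points[OF cop qnz nonconst dist sq] by simp
  qed
qed

end
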